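(* Setting: $\Phi(w)=f(w)+g(w)+h(w)$ on $\mathbb{R}^d$, where $f(w)=\mathbb{E}_{\xi}[F(w,\xi)]$ is $L$-smooth, for every $w$ the stochastic gradient $\nabla F(w,\xi)$ satisfies $\mathbb{E}_\xi[\nabla F(w,\xi)]=\nabla f(w)$ and $\mathbb{E}_\xi\|\nabla F(w,\xi)-\nabla f(w)\|_2^2\le\sigma^2$; $g:\mathbb{R}^d\to\mathbb{R}$ is such that for every $\lambda>0$ and $w$ the minimum of $x\mapsto \frac{1}{2\lambda}\|w-x\|_2^2+g(x)$ is attained at a (chosen) point $\zeta^{\lambda}(w)$; $h$ is proper, closed and convex. Let $e_\lambda g(w)=\frac{1}{2\lambda}\|w-\zeta^{\lambda}(w)\|_2^2+g(\zeta^\lambda(w))$ and $\tilde\Phi_{\lambda}=f+e_{\lambda}g+h$, and assume $\tilde\Phi_\lambda$ has a global minimizer $w^*_\lambda$. Algorithm MBSPA: given $w^1\in\mathbb{R}^d$, $N\in\mathbb{Z}_{>0}$ and $\alpha,\theta\in\mathbb{R}$, set $\lambda=N^{-\theta}$, $L_\lambda=L+N^{\theta}$, $\gamma=1/L_\lambda$, $M=\lceil N^{\alpha}\rceil$. For $k=1,\dots,N$: draw $\xi^k=(\xi^k_1,\dots,\xi^k_M)$ i.i.d. copies of $\xi$, independent of the past, set $\nabla A^k_{\lambda,M}(w^k,\xi^k)=\frac1M\sum_{j=1}^M\nabla F(w^k,\xi^k_j)+\frac1\lambda\left(w^k-\zeta^\lambda(w^k)\right)$ and $w^{k+1}=\operatorname{prox}_{\gamma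 h}\left(w^k-\gamma\nabla A^k_{\lambda,M}(w^k,\xi^k)\right)$. Finally draw $R$ uniformly from $\{1,\dots,N\}$ and output $w^R$. Claim: with $\mathcal{G}^R_{\gamma,E}(w^R):=\frac{1}{\gamma}\left(w^R-\operatorname{prox}_{\gamma h}\left(w^R-\gamma\left(\nabla f(w^R)+\frac1\lambda(w^R-\zeta^\lambda(w^R))\right)\right)\right)$, $$\mathbb{E}\|\mathcal{G}^R_{\gamma,E}(w^R)\|_2^2\le \frac{L+N^{\theta}}{N}\tilde{\mathcal{D}}+\frac{6}{\lceil N^{\alpha}\rceil}\sigma^2,$$ where $\tilde{\mathcal{D}}=4\left(\tilde\Phi_{\lambda}(w^1)-\tilde\Phi_{\lambda}(w^*_{\lambda})\right)$.
   Context: $\operatorname{prox}_{\gamma h}(v)=\arg\min_x\left(\frac{1}{2\gamma}\|v-x\|_2^2+h(x)\right)$. A function is $L$-smooth if it is differentiable with $L$-Lipschitz gradient. *)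

theory Defs
  imports "HOL-Probability.Probability"
begin

definition prox :: "real \<Rightarrow> ('a::real_normed_vector \<Rightarrow> ereal) \<Rightarrow> 'a \<Rightarrow> 'a" where
  "prox \<gamma> h v = (THE x. \<forall>y. ereal (1 / (2 * \<gamma>) * (norm (v - x))\<^sup>2) + h x
                                \<le> ereal (1 / (2 * \<gamma>) * (norm (v - y))\<^sup>2) + h y)"

definition proper_fun :: "('a \<Rightarrow> ereal) \<Rightarrow> bool" where
  "proper_fun h \<longleftrightarrow> (\<forall>x. h x \<noteq> -\<infinity>) \<and> (\<exists>x. h x \<noteq> \<infinity>)"

definition closed_fun :: "('a::topological_space \<Rightarrow> ereal) \<Rightarrow> bool" where
  "closed_fun h \<longleftrightarrow> closed {(x, t::real). h x \<le> ereal t}"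

definition convex_fun :: "('a::real_vector \<Rightarrow> ereal) \<Rightarrow> bool" where
  "convex_fun h \<longleftrightarrow> convex {(x, t::real). h x \<le> ereal t}"

definition env :: "('a::real_normed_vector \<Rightarrow> real) \<Rightarrow> (real \<Rightarrow> 'a \<Rightarrow> 'a) \<Rightarrow> real \<Rightarrow> 'a \<Rightarrow> real" where
  "env g \<zeta> lam w = 1 / (2 * lam) * (norm (w - \<zeta> lam w))\<^sup>2 + g (\<zeta> lam w)"

text \<open>MBSPA iterates for a fixed realisation xi k j of the samples (k-th iteration, j-th
  batch element).  mbspa ... n is w^{n+1}; so w^k = mbspa ... (k - 1).\<close>
primrec mbspa :: "('a::real_normed_vector \<Rightarrow> 'b \<Rightarrow> 'a) \<Rightarrow> (real \<Rightarrow> 'a \<Rightarrow> 'a) \<Rightarrow> ('a \<Rightarrow> ereal)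
    \<Rightarrow> real \<Rightarrow> real \<Rightarrow> nat \<Rightarrow> (nat \<Rightarrow> nat \<Rightarrow> 'b) \<Rightarrow> 'a \<Rightarrow> nat \<Rightarrow> 'a" where
  "mbspa G \<zeta> h lam \<gamma> M xi w1 0 = w1"
| "mbspa G \<zeta> h lam \<gamma> M xi w1 (Suc n) =
     (let w = mbspa G \<zeta> h lam \<gamma> M xi w1 n;
          dA = (1 / real M) *\<^sub>R (\<Sum>j = 1..M. G w (xi (Suc n) j)) + (1 / lam) *\<^sub>R (w - \<zeta> lam w)
      in prox \<gamma> h (w - \<gamma> *\<^sub>R dA))"

definition grad_map :: "('a::real_normed_vector \<Rightarrow> 'a) \<Rightarrow> (real \<Rightarrow> 'a \<Rightarrow> 'a) \<Rightarrow> ('a \<Rightarrow> ereal)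
    \<Rightarrow> real \<Rightarrow> real \<Rightarrow> 'a \<Rightarrow> 'a" where
  "grad_map gradf \<zeta> h lam \<gamma> w =
     (1 / \<gamma>) *\<^sub>R (w - prox \<gamma> h (w - \<gamma> *\<^sub>R (gradf w + (1 / lam) *\<^sub>R (w - \<zeta> lam w))))"

end

theory Submission
  imports Defs
begin

lemma norm_add_square:
  fixes x y :: "'a::real_inner"
  shows "(norm (x + y))\<^sup>2 = (norm x)\<^sup>2 + 2 * (x \<bullet> y) + (norm y)\<^sup>2"
  by (simp add: power2_norm_eq_inner inner_add_left inner_add_right inner_commute)

lemma norm_diff_square:
  fixes x y :: "'a::real_inner"
  shows "(norm (x - y))\<^sup>2 = (norm x)\<^sup>2 - 2 * (x \<bullet> y) + (norm y)\<^sup>2"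
  by (simp add: power2_norm_eq_inner inner_diff_left inner_diff_right inner_commute)

lemma proper_funD:
  assumes "proper_fun h"
  shows proper_fun_not_MInf: "h x \<noteq> -\<infinity>" and proper_fun_finite_point: "\<exists>x c. h x = ereal c"
proof -
  show "h x \<noteq> -\<infinity>" for x using assms unfolding proper_fun_def by auto
  obtain x where "h x \<noteq> \<infinity>" using assms unfolding proper_fun_def by auto
  with \<open>h x \<noteq> -\<infinity>\<close> show "\<exists>x c. h x = ereal c" by (cases "h x") auto
qed

lemma convex_funD:
  assumes "convex_fun h" "h x = ereal a" "h y = ereal b" "0 \<le> u" "u \<le> 1"
  shows "h ((1 - u) *\<^sub>R x + u *\<^sub>R y) \<le> ereal ((1 - u) * a + u * b)"
proof -
  have "(1 - u) *\<^sub>R (x, a) + u *\<^sub>R (y, b) \<in> {(x, t::real). h x \<le> ereal t}"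
    using assms by (intro convexD[OF assms(1)[unfolded convex_fun_def]]) auto
  then show ?thesis by simp
qed

lemma closed_sublevel_closed_fun:
  assumes "closed_fun h"
  shows "closed {x. h x \<le> a}"
proof -
  have real: "closed {x. h x \<le> ereal t}" for t
  proof -
    have "{x. h x \<le> ereal t} = (\<lambda>x. (x, t)) -` {(x, t). h x \<le> ereal t}" by auto
    also have "closed \<dots>"
      using assms unfolding closed_fun_def by (rule closed_vimage) (intro continuous_intros)
    finally show ?thesis .
  qed
  show ?thesis
  proof (cases a)
    case MInf
    then have "{x. h x \<le> a} = (\<Inter>t. {x. h x \<le> ereal t})"
      by (auto intro: ereal_bot)
    then show ?thesis using real by auto
  qed (use real in auto)
qed

lemma borel_measurable_closed_fun:
  fixes h :: "'a::topological_space \<Rightarrow> ereal"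
  assumes "closed_fun h"
  shows "h \<in> borel_measurable borel"
  unfolding borel_measurable_ereal_iff_Ioi
proof
  fix a :: ereal
  have "h -` {a<..} \<inter> space borel = - {x. h x \<le> a}" by auto
  then show "h -` {a<..} \<inter> space borel \<in> sets borel"
    using closed_sublevel_closed_fun[OF assms] by (simp add: borel_open open_Compl)
qed

lemma proper_closed_convex_affine_minorant:
  fixes h :: "'a::euclidean_space \<Rightarrow> ereal"
  assumes "proper_fun h" "closed_fun h" "convex_fun h"
  obtains a b where "\<And>x. ereal (a \<bullet> x + b) \<le> h x"
proof -
  obtain x0 c where c: "h x0 = ereal c" using proper_fun_finite_point[OF assms(1)] by blast
  define S where "S = {(x, t::real). h x \<le> ereal t}"
  have S: "closed S" "convex S" using assms(2,3) unfolding S_def closed_fun_def convex_fun_def by auto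
  have "(x0, c - 1) \<notin> S" using c unfolding S_def by auto
  obtain a1 a2 b where ab: "a1 \<bullet> x0 + a2 * (c - 1) < b" "\<And>x t. h x \<le> ereal t \<Longrightarrow> a1 \<bullet> x + a2 * t > b"
    using separating_hyperplane_closed_point[OF S(2,1) \<open>(x0, c - 1) \<notin> S\<close>]
    unfolding S_def by (force simp: inner_Pair)
  have "a1 \<bullet> x0 + a2 * c > b" using ab(2)[of x0 c] c by simp
  with ab(1) have a2: "a2 > 0" by (simp add: algebra_simps)
  show ?thesis
  proof
    fix x
    show "ereal ((-(1/a2)) *\<^sub>R a1 \<bullet> x + b / a2) \<le> h x"
    proof (cases "h x")
      case (real t)
      with ab(2)[of x t] a2 show ?thesis by (simp add: field_simps inner_commute)
    qed (use proper_fun_not_MInf[OF assms(1)] in auto)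
  qed
qed

lemma le_max_one_if_square_le_affine:
  fixes r a b :: real
  assumes "0 \<le> b" and "r * r \<le> a + b * r"
  shows "r \<le> max 1 (\<bar>a\<bar> + b)"
proof (cases "r \<le> 1")
  case False
  then have "a \<le> \<bar>a\<bar> * r" by (smt (verit) mult_le_cancel_left1)
  with assms(2) have "r * r \<le> (\<bar>a\<bar> + b) * r" by (simp add: distrib_right)
  with False show ?thesis by simp
qed simp

lemma prox_objective_attains_min:
  fixes h :: "'a::euclidean_space \<Rightarrow> ereal"
  assumes h: "proper_fun h" "closed_fun h" "convex_fun h" and "\<gamma> > 0"
  obtains p where "\<And>y. ereal (1 / (2 * \<gamma>) * (norm (v - p))\<^sup>2) + h p
                       \<le> ereal (1 / (2 * \<gamma>) * (norm (v - y))\<^sup>2) + h y"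
proof -
  define q where "q x = 1 / (2 * \<gamma>) * (norm (v - x))\<^sup>2" for x
  obtain a b where ab: "\<And>x. ereal (a \<bullet> x + b) \<le> h x"
    using proper_closed_convex_affine_minorant[OF h] by blast
  obtain x0 c where c: "h x0 = ereal c" using proper_fun_finite_point[OF h(1)] by blast
  define C where "C = q x0 + c"
  define E where "E = {(x, t::real). h x \<le> ereal t} \<inter> {z. q (fst z) + snd z \<le> C}"
  define B where "B = max 1 (\<bar>2 * \<gamma> * (C - b + norm a * norm v)\<bar> + 2 * \<gamma> * norm a)"
  have E_bounds: "norm (v - x) \<le> B \<and> b - norm a * (norm v + B) \<le> t \<and> t \<le> C" if "(x, t) \<in> E" for x t
  proof -
    from that have "a \<bullet> x + b \<le> t" and qt: "q x + t \<le> C"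
      using ab[of x] unfolding E_def by (auto dest: order_trans)
    moreover have "- (norm a * (norm v + norm (v - x))) \<le> a \<bullet> x"
    proof -
      have "norm x \<le> norm v + norm (v - x)" by (metis norm_minus_commute norm_triangle_sub)
      then have "norm a * norm x \<le> norm a * (norm v + norm (v - x))" by (simp add: mult_left_mono)
      then show ?thesis using Cauchy_Schwarz_ineq2[of a x] by (simp add: abs_le_iff)
    qed
    ultimately have lo: "b - norm a * (norm v + norm (v - x)) \<le> t" by linarith
    have "(norm (v - x))\<^sup>2 / (2 * \<gamma>) \<le> (C - b + norm a * norm v) + norm a * norm (v - x)"
      using qt lo unfolding q_def by (simp add: algebra_simps)
    then have "(norm (v - x))\<^sup>2 \<le> ((C - b + norm a * norm v) + norm a * norm (v - x)) * (2 * \<gamma>)"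
      using \<open>\<gamma> > 0\<close> by (simp add: pos_divide_le_eq)
    then have "norm (v - x) * norm (v - x)
        \<le> 2 * \<gamma> * (C - b + norm a * norm v) + 2 * \<gamma> * norm a * norm (v - x)"
      by (simp add: power2_eq_square algebra_simps)
    then have r: "norm (v - x) \<le> B"
      unfolding B_def using \<open>\<gamma> > 0\<close> by (intro le_max_one_if_square_le_affine) auto
    moreover have "t \<le> C" using qt \<open>\<gamma> > 0\<close> unfolding q_def by (smt (verit) zero_le_divide_1_iff zero_le_mult_iff zero_le_power2)
    moreover have "b - norm a * (norm v + B) \<le> t"
      using lo r by (smt (verit) mult_left_mono norm_ge_zero)
    ultimately show ?thesis by simp
  qed
  have "E \<subseteq> cball v B \<times> {b - norm a * (norm v + B) .. C}"
    using E_bounds by (auto simp: dist_norm)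
  then have "bounded E" by (rule bounded_subset[rotated]) (intro bounded_Times bounded_cball bounded_closed_interval)
  moreover have "closed E" unfolding E_def
    using h(2) \<open>\<gamma> > 0\<close> unfolding closed_fun_def
    by (intro closed_Int) (auto intro!: closed_Collect_le continuous_intros simp: q_def)
  ultimately have "compact E" by (simp add: compact_eq_bounded_closed)
  moreover have "(x0, c) \<in> E" unfolding E_def C_def using c by simp
  moreover have "continuous_on E (\<lambda>z. q (fst z) + snd z)" unfolding q_def by (intro continuous_intros)
  ultimately obtain z where z: "z \<in> E" and z_min: "\<And>y. y \<in> E \<Longrightarrow> q (fst z) + snd z \<le> q (fst y) + snd y"
    using continuous_attains_inf[of E "\<lambda>z. q (fst z) + snd z"] by blast
  obtain p s where ps: "(p, s) \<in> E" and ps_min: "\<And>x t. (x, t) \<in> E \<Longrightarrow> q p + s \<le> q x + t"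
    using z z_min by (metis fst_conv prod.collapse snd_conv)
  show ?thesis
  proof
    fix y
    have "ereal (q p) + h p \<le> ereal (q p + s)"
      using ps add_left_mono[of "h p" "ereal s" "ereal (q p)"] unfolding E_def by simp
    also have "\<dots> \<le> ereal (q y) + h y"
    proof (cases "h y")
      case (real t)
      with ps_min[of y t] ps show ?thesis by (cases "q y + t \<le> C") (auto simp: E_def)
    qed (use proper_fun_not_MInf[OF h(1)] in auto)
    finally show "ereal (1 / (2 * \<gamma>) * (norm (v - p))\<^sup>2) + h p
                  \<le> ereal (1 / (2 * \<gamma>) * (norm (v - y))\<^sup>2) + h y" unfolding q_def .
  qed
qed

lemma le_if_le_add_small_multiple:
  fixes x y z :: real
  assumes "\<And>t. 0 < t \<Longrightarrow> t \<le> 1 \<Longrightarrow> x \<le> y + t * z" and "0 \<le> z"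
  shows "x \<le> y"
proof (rule field_le_epsilon)
  fix e :: real
  assume "0 < e"
  define t where "t = min 1 (e / (z + 1))"
  have t: "0 < t" "t \<le> 1" using \<open>0 < e\<close> \<open>0 \<le> z\<close> by (auto simp: t_def)
  have "t * z \<le> e / (z + 1) * z" unfolding t_def using \<open>0 \<le> z\<close> by (intro mult_right_mono) auto
  also have "\<dots> \<le> e" using \<open>0 < e\<close> \<open>0 \<le> z\<close> by (simp add: field_simps)
  finally show "x \<le> y + e" using assms(1)[OF t] by linarith
qed

lemma prox_objective_min_variational_ineq:
  fixes h :: "'a::real_inner \<Rightarrow> ereal"
  assumes "proper_fun h" "convex_fun h" "\<gamma> > 0"
    and p_min: "\<And>y. ereal (1 / (2 * \<gamma>) * (norm (v - p))\<^sup>2) + h p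
                    \<le> ereal (1 / (2 * \<gamma>) * (norm (v - y))\<^sup>2) + h y"
  obtains a where "h p = ereal a" and "\<And>y b. h y = ereal b \<Longrightarrow> a + ((v - p) \<bullet> (y - p)) / \<gamma> \<le> b"
proof -
  define q where "q x = 1 / (2 * \<gamma>) * (norm (v - x))\<^sup>2" for x
  obtain x0 c where c: "h x0 = ereal c" using proper_fun_finite_point[OF assms(1)] by blast
  have "ereal (q p) + h p \<le> ereal (q x0 + c)" using p_min[of x0] c unfolding q_def by simp
  then have "h p \<noteq> \<infinity>" by auto
  then obtain a where a: "h p = ereal a" using proper_fun_not_MInf[OF assms(1)] by (cases "h p") auto
  show ?thesis
  proof (rule that[OF a])
    fix y b
    assume b: "h y = ereal b"
    show "a + ((v - p) \<bullet> (y - p)) / \<gamma> \<le> b"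
    proof (rule le_if_le_add_small_multiple)
      fix t :: real
      assume t: "0 < t" "t \<le> 1"
      define yt where "yt = (1 - t) *\<^sub>R p + t *\<^sub>R y"
      have "(norm (v - yt))\<^sup>2 = (norm ((v - p) - t *\<^sub>R (y - p)))\<^sup>2"
        unfolding yt_def by (simp add: algebra_simps)
      also have "\<dots> = (norm (v - p))\<^sup>2 - 2 * t * ((v - p) \<bullet> (y - p)) + t\<^sup>2 * (norm (y - p))\<^sup>2"
        by (subst norm_diff_square) (simp add: power_mult_distrib)
      finally have q_yt: "q yt = q p - t * ((v - p) \<bullet> (y - p)) / \<gamma> + t\<^sup>2 * (norm (y - p))\<^sup>2 / (2 * \<gamma>)"
        unfolding q_def using \<open>\<gamma> > 0\<close> by (simp add: field_simps)
      have "ereal (q p + a) \<le> ereal (q yt) + h yt" using p_min[of yt] a unfolding q_def by simp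
      also have "\<dots> \<le> ereal (q yt) + ereal ((1 - t) * a + t * b)"
        unfolding yt_def using convex_funD[OF assms(2) a b] t by (intro add_left_mono) auto
      finally have "q p + a \<le> q yt + ((1 - t) * a + t * b)" by simp
      then have "t * a \<le> t * (b - ((v - p) \<bullet> (y - p)) / \<gamma> + t * ((norm (y - p))\<^sup>2 / (2 * \<gamma>)))"
        unfolding q_yt by (simp add: algebra_simps power2_eq_square)
      then show "a + ((v - p) \<bullet> (y - p)) / \<gamma> \<le> b + t * ((norm (y - p))\<^sup>2 / (2 * \<gamma>))"
        using t by simp
    qed (use \<open>\<gamma> > 0\<close> in simp)
  qed
qed

lemma variational_ineq_nonexpansive:
  fixes p p' v v' :: "'a::real_inner"
  assumes "\<gamma> > 0"
    and "a + ((v - p) \<bullet> (p' - p)) / \<gamma> \<le> a'"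
    and "a' + ((v' - p') \<bullet> (p - p')) / \<gamma> \<le> a"
  shows "norm (p - p') \<le> norm (v - v')"
proof -
  have "((v - p) \<bullet> (p' - p) + (v' - p') \<bullet> (p - p')) / \<gamma> \<le> 0"
    using assms(2,3) by (simp add: add_divide_distrib)
  then have "(v - p) \<bullet> (p' - p) + (v' - p') \<bullet> (p - p') \<le> 0"
    using \<open>\<gamma> > 0\<close> by (simp add: divide_le_0_iff)
  moreover have "(v - p) \<bullet> (p' - p) + (v' - p') \<bullet> (p - p') = (norm (p - p'))\<^sup>2 - (v - v') \<bullet> (p - p')"
    unfolding power2_norm_eq_inner by (simp add: inner_diff_left inner_diff_right inner_commute)
  ultimately have "(norm (p - p'))\<^sup>2 \<le> (v - v') \<bullet> (p - p')" by linarith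
  also have "\<dots> \<le> norm (v - v') * norm (p - p')" by (rule norm_cauchy_schwarz)
  finally show ?thesis
    by (cases "p = p'") (auto simp: power2_eq_square mult_le_cancel_right)
qed

lemma prox_eqI:
  fixes h :: "'a::real_inner \<Rightarrow> ereal"
  assumes h: "proper_fun h" "convex_fun h" and "\<gamma> > 0"
    and p_min: "\<And>y. ereal (1 / (2 * \<gamma>) * (norm (v - p))\<^sup>2) + h p
                    \<le> ereal (1 / (2 * \<gamma>) * (norm (v - y))\<^sup>2) + h y"
  shows "prox \<gamma> h v = p"
  unfolding prox_def
proof (rule the_equality)
  fix x
  assume "\<forall>y. ereal (1 / (2 * \<gamma>) * (norm (v - x))\<^sup>2) + h x
             \<le> ereal (1 / (2 * \<gamma>) * (norm (v - y))\<^sup>2) + h y"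
  then obtain a' where a': "h x = ereal a'" "\<And>y b. h y = ereal b \<Longrightarrow> a' + ((v - x) \<bullet> (y - x)) / \<gamma> \<le> b"
    using prox_objective_min_variational_ineq[OF h \<open>\<gamma> > 0\<close>] by blast
  obtain a where a: "h p = ereal a" "\<And>y b. h y = ereal b \<Longrightarrow> a + ((v - p) \<bullet> (y - p)) / \<gamma> \<le> b"
    using prox_objective_min_variational_ineq[OF h \<open>\<gamma> > 0\<close> p_min] by blast
  have "norm (x - p) \<le> norm (v - v)"
    using \<open>\<gamma> > 0\<close> a'(2)[OF a(1)] a(2)[OF a'(1)] by (rule variational_ineq_nonexpansive)
  then show "x = p" by simp
qed (use p_min in blast)

lemma prox_variational_ineq:
  fixes h :: "'a::euclidean_space \<Rightarrow> ereal"
  assumes h: "proper_fun h" "closed_fun h" "convex_fun h" and "\<gamma> > 0"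
  obtains a where "h (prox \<gamma> h v) = ereal a"
    and "\<And>y b. h y = ereal b \<Longrightarrow> a + ((v - prox \<gamma> h v) \<bullet> (y - prox \<gamma> h v)) / \<gamma> \<le> b"
proof -
  obtain p where p_min: "\<And>y. ereal (1 / (2 * \<gamma>) * (norm (v - p))\<^sup>2) + h p
                              \<le> ereal (1 / (2 * \<gamma>) * (norm (v - y))\<^sup>2) + h y"
    using prox_objective_attains_min[OF h \<open>\<gamma> > 0\<close>] by blast
  moreover have "prox \<gamma> h v = p" using h(1,3) \<open>\<gamma> > 0\<close> p_min by (rule prox_eqI)
  ultimately show ?thesis
    using prox_objective_min_variational_ineq[OF h(1,3) \<open>\<gamma> > 0\<close>] that by metis
qed

lemma prox_nonexpansive:
  fixes h :: "'a::euclidean_space \<Rightarrow> ereal"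
  assumes h: "proper_fun h" "closed_fun h" "convex_fun h" and "\<gamma> > 0"
  shows "norm (prox \<gamma> h u - prox \<gamma> h v) \<le> norm (u - v)"
proof -
  obtain a where a: "h (prox \<gamma> h u) = ereal a"
    "\<And>y b. h y = ereal b \<Longrightarrow> a + ((u - prox \<gamma> h u) \<bullet> (y - prox \<gamma> h u)) / \<gamma> \<le> b"
    using prox_variational_ineq[OF h \<open>\<gamma> > 0\<close>] by blast
  obtain a' where a': "h (prox \<gamma> h v) = ereal a'"
    "\<And>y b. h y = ereal b \<Longrightarrow> a' + ((v - prox \<gamma> h v) \<bullet> (y - prox \<gamma> h v)) / \<gamma> \<le> b"
    using prox_variational_ineq[OF h \<open>\<gamma> > 0\<close>] by blast
  show ?thesis using \<open>\<gamma> > 0\<close> a(2)[OF a'(1)] a'(2)[OF a(1)] by (rule variational_ineq_nonexpansive)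
qed

lemma continuous_on_prox:
  fixes h :: "'a::euclidean_space \<Rightarrow> ereal"
  assumes "proper_fun h" "closed_fun h" "convex_fun h" and "\<gamma> > 0"
  shows "continuous_on UNIV (prox \<gamma> h)"
  by (rule lipschitz_on_continuous_on[of 1])
    (simp add: lipschitz_on_def dist_norm prox_nonexpansive[OF assms])

lemma lipschitz_const_nonneg:
  fixes F :: "'a::euclidean_space \<Rightarrow> 'b::real_normed_vector"
  assumes "\<And>x y. norm (F x - F y) \<le> L * norm (x - y)"
  shows "0 \<le> L"
proof -
  obtain e :: 'a where "e \<in> Basis" using nonempty_Basis by blast
  then have "norm e = 1" by simp
  have "0 \<le> norm (F e - F 0)" by simp
  also have "\<dots> \<le> L * norm (e - 0)" by (rule assms)
  finally show ?thesis using \<open>norm e = 1\<close> by simp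
qed

lemma lipschitz_gradient_quadratic_upper_bound:
  fixes f :: "'a::real_inner \<Rightarrow> real"
  assumes f_grad: "\<And>w. (f has_derivative (\<lambda>u. gradf w \<bullet> u)) (at w)"
    and lip: "\<And>x y. norm (gradf x - gradf y) \<le> L * norm (x - y)"
  shows "f y \<le> f x + gradf x \<bullet> (y - x) + L / 2 * (norm (y - x))\<^sup>2"
proof -
  define d where "d = y - x"
  define \<phi> where "\<phi> t = f (x + t *\<^sub>R d) - t * (gradf x \<bullet> d) - L / 2 * t\<^sup>2 * (norm d)\<^sup>2" for t
  have \<phi>_deriv: "(\<phi> has_real_derivative (gradf (x + t *\<^sub>R d) - gradf x) \<bullet> d - L * t * (norm d)\<^sup>2) (at t)" for t
  proof -
    have "((\<lambda>t. f (x + t *\<^sub>R d)) has_derivative (\<lambda>s. gradf (x + t *\<^sub>R d) \<bullet> (s *\<^sub>R d))) (at t)"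
      by (rule has_derivative_compose[OF _ f_grad]) (auto intro!: derivative_eq_intros)
    then have "((\<lambda>t. f (x + t *\<^sub>R d)) has_real_derivative gradf (x + t *\<^sub>R d) \<bullet> d) (at t)"
      by (simp add: has_field_derivative_def mult_commute_abs)
    then show ?thesis unfolding \<phi>_def
      by (auto intro!: derivative_eq_intros simp: power2_eq_square inner_diff_left algebra_simps)
  qed
  have "\<phi> 1 \<le> \<phi> 0"
  proof (rule DERIV_nonpos_imp_nonincreasing[of 0 1])
    fix t :: real
    assume t: "0 \<le> t" "t \<le> 1"
    have "(gradf (x + t *\<^sub>R d) - gradf x) \<bullet> d \<le> norm (gradf (x + t *\<^sub>R d) - gradf x) * norm d"
      by (rule norm_cauchy_schwarz)
    also have "\<dots> \<le> L * norm ((x + t *\<^sub>R d) - x) * norm d" by (intro mult_right_mono lip) auto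
    also have "\<dots> = L * t * (norm d)\<^sup>2" using t by (simp add: power2_eq_square)
    finally show "\<exists>y. (\<phi> has_real_derivative y) (at t) \<and> y \<le> 0" using \<phi>_deriv[of t] by auto
  qed simp
  then show ?thesis unfolding \<phi>_def d_def by (simp add: algebra_simps)
qed

lemma env_quadratic_upper_bound:
  assumes \<zeta>_min: "\<And>w x. 1 / (2 * lam) * (norm (w - \<zeta> lam w))\<^sup>2 + g (\<zeta> lam w)
                         \<le> 1 / (2 * lam) * (norm (w - x))\<^sup>2 + g x"
  shows "env g \<zeta> lam y
           \<le> env g \<zeta> lam x + ((1 / lam) *\<^sub>R (x - \<zeta> lam x)) \<bullet> (y - x) + 1 / (2 * lam) * (norm (y - x))\<^sup>2"
proof -
  have "env g \<zeta> lam y \<le> 1 / (2 * lam) * (norm ((x - \<zeta> lam x) + (y - x)))\<^sup>2 + g (\<zeta> lam x)"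
    unfolding env_def using \<zeta>_min[of y "\<zeta> lam x"] by simp
  then show ?thesis unfolding env_def norm_add_square by (simp add: algebra_simps)
qed

lemma borel_measurable_env:
  fixes g :: "'a::real_normed_vector \<Rightarrow> real"
  assumes \<zeta>_min: "\<And>w x. 1 / (2 * lam) * (norm (w - \<zeta> lam w))\<^sup>2 + g (\<zeta> lam w)
                         \<le> 1 / (2 * lam) * (norm (w - x))\<^sup>2 + g x"
  shows "env g \<zeta> lam \<in> borel_measurable borel"
  unfolding borel_measurable_iff_less
proof
  fix a
  have "{w \<in> space borel. env g \<zeta> lam w < a} = (\<Union>x. {w. 1 / (2 * lam) * (norm (w - x))\<^sup>2 + g x < a})"
    unfolding env_def using \<zeta>_min by (auto intro: le_less_trans)
  also have "open \<dots>" by (intro open_UN ballI open_Collect_less continuous_intros)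
  finally show "{w \<in> space borel. env g \<zeta> lam w < a} \<in> sets borel" by simp
qed

lemma nn_integral_norm_sq_add_centered:
  fixes g :: "'b \<Rightarrow> 'a::euclidean_space"
  assumes D: "prob_space D" and gi: "integrable D g" and gm: "(\<integral>\<xi>. g \<xi> \<partial>D) = mu"
    and gv: "integrable D (\<lambda>\<xi>. (norm (g \<xi> - mu))\<^sup>2)"
  shows "(\<integral>\<^sup>+ y. ennreal ((norm (s + (g y - mu)))\<^sup>2) \<partial>D)
          = ennreal ((norm s)\<^sup>2 + (\<integral>\<xi>. (norm (g \<xi> - mu))\<^sup>2 \<partial>D))"
proof -
  interpret D: prob_space D by fact
  have eq: "(norm (s + (g y - mu)))\<^sup>2 = (norm s)\<^sup>2 + 2 * (s \<bullet> (g y - mu)) + (norm (g y - mu))\<^sup>2" for y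
    by (rule norm_add_square)
  have i1: "integrable D (\<lambda>y. s \<bullet> (g y - mu))" using gi by auto
  have int: "integrable D (\<lambda>y. (norm s)\<^sup>2 + 2 * (s \<bullet> (g y - mu)) + (norm (g y - mu))\<^sup>2)"
    using i1 gv by auto
  have "(\<integral>y. s \<bullet> (g y - mu) \<partial>D) = s \<bullet> (\<integral>y. g y - mu \<partial>D)"
    using gi by simp
  also have "(\<integral>y. g y - mu \<partial>D) = 0" using gi gm by (simp add: D.prob_space)
  finally have z: "(\<integral>y. s \<bullet> (g y - mu) \<partial>D) = 0" by simp
  have "(\<integral>\<^sup>+ y. ennreal ((norm (s + (g y - mu)))\<^sup>2) \<partial>D)
      = ennreal (\<integral>y. (norm s)\<^sup>2 + 2 * (s \<bullet> (g y - mu)) + (norm (g y - mu))\<^sup>2 \<partial>D)"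
    using int unfolding eq[symmetric] by (intro nn_integral_eq_integral) auto
  also have "(\<integral>y. (norm s)\<^sup>2 + 2 * (s \<bullet> (g y - mu)) + (norm (g y - mu))\<^sup>2 \<partial>D)
      = (norm s)\<^sup>2 + 2 * (\<integral>y. s \<bullet> (g y - mu) \<partial>D) + (\<integral>\<xi>. (norm (g \<xi> - mu))\<^sup>2 \<partial>D)"
    using i1 gv by (simp add: D.prob_space)
  finally show ?thesis using z by simp
qed

lemma nn_integral_norm_sq_sum_centered_le:
  fixes g :: "'b \<Rightarrow> 'a::euclidean_space" and J :: "'i set"
  assumes D: "prob_space D" and gi: "integrable D g" and gm: "(\<integral>\<xi>. g \<xi> \<partial>D) = mu"
    and gv: "integrable D (\<lambda>\<xi>. (norm (g \<xi> - mu))\<^sup>2)" and gs: "(\<integral>\<xi>. (norm (g \<xi> - mu))\<^sup>2 \<partial>D) \<le> s2"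
    and J: "finite J"
  shows "(\<integral>\<^sup>+ b. ennreal ((norm (\<Sum>i\<in>J. g (b i) - mu))\<^sup>2) \<partial>PiM J (\<lambda>_. D)) \<le> ennreal (real (card J) * s2)"
  using J
proof (induction J rule: finite_induct)
  case empty
  then show ?case by simp
next
  case (insert i J)
  interpret PS: product_sigma_finite "\<lambda>_::'i. D"
    using D unfolding product_sigma_finite_def by (simp add: prob_space_imp_sigma_finite)
  interpret D: prob_space D by fact
  have "0 \<le> (\<integral>\<xi>. (norm (g \<xi> - mu))\<^sup>2 \<partial>D)" by (intro integral_nonneg_AE) auto
  then have s2: "s2 \<ge> 0" using gs by linarith
  have gmeas[measurable]: "g \<in> borel_measurable D" using gi by auto
  have "(\<integral>\<^sup>+ b. ennreal ((norm (\<Sum>i\<in>insert i J. g (b i) - mu))\<^sup>2) \<partial>PiM (insert i J) (\<lambda>_. D))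
      = (\<integral>\<^sup>+ x. (\<integral>\<^sup>+ y. ennreal ((norm (\<Sum>j\<in>insert i J. g ((x(i := y)) j) - mu))\<^sup>2) \<partial>D) \<partial>PiM J (\<lambda>_. D))"
    using insert by (intro PS.product_nn_integral_insert) auto
  also have "\<dots> = (\<integral>\<^sup>+ x. ennreal ((norm (\<Sum>j\<in>J. g (x j) - mu))\<^sup>2 + (\<integral>\<xi>. (norm (g \<xi> - mu))\<^sup>2 \<partial>D)) \<partial>PiM J (\<lambda>_. D))"
  proof (intro nn_integral_cong)
    fix x
    have "(\<Sum>j\<in>insert i J. g ((x(i := y)) j) - mu) = (\<Sum>j\<in>J. g (x j) - mu) + (g y - mu)" for y
    proof -
      have "(\<Sum>j\<in>J. g ((x(i := y)) j) - mu) = (\<Sum>j\<in>J. g (x j) - mu)"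
        using insert(2) by (intro sum.cong) auto
      then show ?thesis using insert(1,2) by (simp add: add.commute)
    qed
    then show "(\<integral>\<^sup>+ y. ennreal ((norm (\<Sum>j\<in>insert i J. g ((x(i := y)) j) - mu))\<^sup>2) \<partial>D)
        = ennreal ((norm (\<Sum>j\<in>J. g (x j) - mu))\<^sup>2 + (\<integral>\<xi>. (norm (g \<xi> - mu))\<^sup>2 \<partial>D))"
      using nn_integral_norm_sq_add_centered[OF D gi gm gv] by simp
  qed
  also have "\<dots> \<le> (\<integral>\<^sup>+ x. ennreal ((norm (\<Sum>j\<in>J. g (x j) - mu))\<^sup>2) + ennreal s2 \<partial>PiM J (\<lambda>_. D))"
  proof (intro nn_integral_mono)
    fix x
    let ?A = "(norm (\<Sum>j\<in>J. g (x j) - mu))\<^sup>2"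
    have "ennreal (?A + (\<integral>\<xi>. (norm (g \<xi> - mu))\<^sup>2 \<partial>D)) \<le> ennreal (?A + s2)"
      by (rule ennreal_leI) (use gs in simp)
    also have "\<dots> = ennreal ?A + ennreal s2" using s2 by (simp add: ennreal_plus)
    finally show "ennreal (?A + (\<integral>\<xi>. (norm (g \<xi> - mu))\<^sup>2 \<partial>D)) \<le> ennreal ?A + ennreal s2" .
  qed
  also have "\<dots> = (\<integral>\<^sup>+ x. ennreal ((norm (\<Sum>j\<in>J. g (x j) - mu))\<^sup>2) \<partial>PiM J (\<lambda>_. D)) + ennreal s2"
  proof -
    have "prob_space (PiM J (\<lambda>_. D))" using D by (intro prob_space_PiM) auto
    then show ?thesis by (subst nn_integral_add) (auto simp: prob_space.emeasure_space_1)
  qed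
  also have "\<dots> \<le> ennreal (real (card J) * s2) + ennreal s2" using insert(3) by (rule add_right_mono)
  also have "\<dots> = ennreal (real (card (insert i J)) * s2)"
    using insert s2 by (simp add: ennreal_plus[symmetric] algebra_simps del: ennreal_plus)
  finally show ?case .
qed

lemma minibatch_noise_moments:
  fixes g :: "'b \<Rightarrow> 'a::euclidean_space" and J :: "'i set"
  assumes D: "prob_space D" and J: "finite J"
    and gi: "integrable D g" and gm: "(\<integral>\<xi>. g \<xi> \<partial>D) = mu"
    and gv: "integrable D (\<lambda>\<xi>. (norm (g \<xi> - mu))\<^sup>2)" and gs: "(\<integral>\<xi>. (norm (g \<xi> - mu))\<^sup>2 \<partial>D) \<le> s2"
  defines "S \<equiv> \<lambda>b. \<Sum>i\<in>J. g (b i) - mu"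
  shows "integrable (PiM J (\<lambda>_. D)) S" and "(\<integral>b. S b \<partial>PiM J (\<lambda>_. D)) = 0"
    and "integrable (PiM J (\<lambda>_. D)) (\<lambda>b. (norm (S b))\<^sup>2)"
    and "(\<integral>b. (norm (S b))\<^sup>2 \<partial>PiM J (\<lambda>_. D)) \<le> real (card J) * s2"
proof -
  interpret PJ: prob_space "PiM J (\<lambda>_. D)" using D by (intro prob_space_PiM) auto
  have [measurable]: "g \<in> borel_measurable D" using gi by auto
  have component: "distr (PiM J (\<lambda>_. D)) D (\<lambda>b. b i) = D" if "i \<in> J" for i
    using distr_PiM_component[of J "\<lambda>_. D" i] that D by simp
  have gi_J: "integrable (PiM J (\<lambda>_. D)) (\<lambda>b. g (b i))" if "i \<in> J" for i
    using gi component[OF that] that by (intro integrable_distr[of "\<lambda>b. b i" _ D]) auto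
  have gm_J: "(\<integral>b. g (b i) \<partial>PiM J (\<lambda>_. D)) = mu" if "i \<in> J" for i
    using integral_distr[of "\<lambda>b. b i" "PiM J (\<lambda>_. D)" D g] component[OF that] gm that by simp
  show "integrable (PiM J (\<lambda>_. D)) S" unfolding S_def using gi_J by auto
  show "(\<integral>b. S b \<partial>PiM J (\<lambda>_. D)) = 0"
    unfolding S_def using gi_J gm_J by (simp add: Bochner_Integration.integral_sum PJ.prob_space)
  have sq: "(\<integral>\<^sup>+ b. ennreal ((norm (S b))\<^sup>2) \<partial>PiM J (\<lambda>_. D)) \<le> ennreal (real (card J) * s2)"
    unfolding S_def using nn_integral_norm_sq_sum_centered_le[OF D gi gm gv gs J] .
  show sq_int: "integrable (PiM J (\<lambda>_. D)) (\<lambda>b. (norm (S b))\<^sup>2)"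
    using sq unfolding S_def by (intro integrableI_bounded) (auto intro: le_less_trans)
  have "0 \<le> (\<integral>\<xi>. (norm (g \<xi> - mu))\<^sup>2 \<partial>D)" by simp
  then have "0 \<le> s2" using gs by linarith
  then have "0 \<le> real (card J) * s2" by simp
  then show "(\<integral>b. (norm (S b))\<^sup>2 \<partial>PiM J (\<lambda>_. D)) \<le> real (card J) * s2"
    using sq nn_integral_eq_integral[OF sq_int] by (simp add: ennreal_le_iff)
qed

locale prox_grad =
  fixes h :: "'a::euclidean_space \<Rightarrow> ereal" and \<psi> :: "'a \<Rightarrow> real" and d\<psi> :: "'a \<Rightarrow> 'a"
    and \<gamma> :: real
  assumes proper: "proper_fun h" and closed: "closed_fun h" and convex: "convex_fun h"
    and step_pos: "0 < \<gamma>"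
    and descent: "\<And>x y. \<psi> y \<le> \<psi> x + d\<psi> x \<bullet> (y - x) + 1 / (2 * \<gamma>) * (norm (y - x))\<^sup>2"
begin

definition grad_mapping :: "'a \<Rightarrow> 'a" where
  "grad_mapping w = (1 / \<gamma>) *\<^sub>R (w - prox \<gamma> h (w - \<gamma> *\<^sub>R d\<psi> w))"

lemma prox_grad_step_descent:
  fixes w \<delta> :: 'a
  assumes hw: "h w = ereal hw"
  defines "p \<equiv> prox \<gamma> h (w - \<gamma> *\<^sub>R (d\<psi> w + \<delta>))"
  obtains hp where "h p = ereal hp"
    and "\<psi> p + hp \<le> \<psi> w + hw - \<gamma> / 2 * (norm ((1 / \<gamma>) *\<^sub>R (w - p)))\<^sup>2 + \<gamma> * (\<delta> \<bullet> ((1 / \<gamma>) *\<^sub>R (w - p)))"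
proof -
  define G where "G = (1 / \<gamma>) *\<^sub>R (w - p)"
  have pG: "p = w - \<gamma> *\<^sub>R G" unfolding G_def using step_pos by simp
  obtain hp where hp: "h p = ereal hp"
    and vi: "\<And>y b. h y = ereal b \<Longrightarrow> hp + ((w - \<gamma> *\<^sub>R (d\<psi> w + \<delta>) - p) \<bullet> (y - p)) / \<gamma> \<le> b"
    using prox_variational_ineq[OF proper closed convex step_pos] unfolding p_def by blast
  have "(w - \<gamma> *\<^sub>R (d\<psi> w + \<delta>) - p) \<bullet> (w - p) = \<gamma> * \<gamma> * ((norm G)\<^sup>2 - (d\<psi> w + \<delta>) \<bullet> G)"
    unfolding pG by (simp add: algebra_simps inner_diff_left power2_norm_eq_inner)
  with vi[OF hw] have "hp + \<gamma> * \<gamma> * ((norm G)\<^sup>2 - (d\<psi> w + \<delta>) \<bullet> G) / \<gamma> \<le> hw" by simp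
  then have "hp + \<gamma> * ((norm G)\<^sup>2 - (d\<psi> w + \<delta>) \<bullet> G) \<le> hw"
    using step_pos by (simp add: mult.assoc)
  moreover have "\<psi> p \<le> \<psi> w - \<gamma> * (d\<psi> w \<bullet> G) + \<gamma> / 2 * (norm G)\<^sup>2"
    using descent[where x = w and y = p] step_pos
    unfolding pG by (simp add: power2_eq_square algebra_simps)
  ultimately show ?thesis
    using that[OF hp] unfolding G_def[symmetric] by (simp add: inner_add_left algebra_simps)
qed

lemma grad_mapping_perturbation:
  "norm ((1 / \<gamma>) *\<^sub>R (w - prox \<gamma> h (w - \<gamma> *\<^sub>R (d + \<delta>))) - (1 / \<gamma>) *\<^sub>R (w - prox \<gamma> h (w - \<gamma> *\<^sub>R d)))
     \<le> norm \<delta>"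
proof -
  have "norm (prox \<gamma> h (w - \<gamma> *\<^sub>R d) - prox \<gamma> h (w - \<gamma> *\<^sub>R (d + \<delta>)))
      \<le> norm ((w - \<gamma> *\<^sub>R d) - (w - \<gamma> *\<^sub>R (d + \<delta>)))"
    by (rule prox_nonexpansive[OF proper closed convex step_pos])
  then show ?thesis using step_pos by (simp add: algebra_simps pos_divide_le_eq flip: scaleR_diff_right)
qed

lemma perturbed_prox_grad_step:
  fixes w \<delta> :: 'a
  assumes hw: "h w = ereal hw"
  defines "p \<equiv> prox \<gamma> h (w - \<gamma> *\<^sub>R (d\<psi> w + \<delta>))"
  obtains hp where "h p = ereal hp"
    and "\<psi> p + hp \<le> \<psi> w + hw - \<gamma> / 4 * (norm (grad_mapping w))\<^sup>2 + \<gamma> * (\<delta> \<bullet> grad_mapping w)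
                    + 3 * \<gamma> / 2 * (norm \<delta>)\<^sup>2"
proof -
  define G where "G = (1 / \<gamma>) *\<^sub>R (w - p)"
  define G0 where "G0 = grad_mapping w"
  obtain hp where hp: "h p = ereal hp"
    and step: "\<psi> p + hp \<le> \<psi> w + hw - \<gamma> / 2 * (norm G)\<^sup>2 + \<gamma> * (\<delta> \<bullet> G)"
    using prox_grad_step_descent[OF hw] unfolding p_def G_def by blast
  have close: "norm (G - G0) \<le> norm \<delta>"
    using grad_mapping_perturbation unfolding G_def G0_def p_def grad_mapping_def .
  have "\<delta> \<bullet> (G - G0) \<le> norm \<delta> * norm (G - G0)" by (rule norm_cauchy_schwarz)
  also have "\<dots> \<le> (norm \<delta>)\<^sup>2" using close by (simp add: power2_eq_square mult_left_mono)
  finally have "\<delta> \<bullet> G \<le> \<delta> \<bullet> G0 + (norm \<delta>)\<^sup>2" by (simp add: inner_diff_right)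
  then have "\<gamma> * (\<delta> \<bullet> G) \<le> \<gamma> * (\<delta> \<bullet> G0 + (norm \<delta>)\<^sup>2)" using step_pos by simp
  moreover have "(norm G0)\<^sup>2 \<le> 2 * (norm G)\<^sup>2 + 2 * (norm \<delta>)\<^sup>2"
  proof -
    have "norm G0 \<le> norm G + norm \<delta>"
      using norm_triangle_sub[of G0 G] close norm_minus_commute[of G0 G] by linarith
    then have "(norm G0)\<^sup>2 \<le> (norm G + norm \<delta>)\<^sup>2" by (simp add: power_mono)
    also have "\<dots> \<le> 2 * (norm G)\<^sup>2 + 2 * (norm \<delta>)\<^sup>2"
      using sum_squares_bound[of "norm G" "norm \<delta>"] by (simp add: power2_sum)
    finally show ?thesis .
  qed
  then have "\<gamma> / 4 * (norm G0)\<^sup>2 \<le> \<gamma> / 4 * (2 * (norm G)\<^sup>2 + 2 * (norm \<delta>)\<^sup>2)" using step_pos by simp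
  ultimately show ?thesis
    using that[OF hp] step unfolding G0_def by (simp add: algebra_simps)
qed

end

lemma mbspa_cong:
  assumes "\<And>m j. m < n \<Longrightarrow> j \<in> {1..M} \<Longrightarrow> xi (Suc m) j = xi' (Suc m) j"
  shows "mbspa G \<zeta> h lam \<gamma> M xi w1 n = mbspa G \<zeta> h lam \<gamma> M xi' w1 n"
  using assms
proof (induction n)
  case (Suc n)
  then have "mbspa G \<zeta> h lam \<gamma> M xi w1 n = mbspa G \<zeta> h lam \<gamma> M xi' w1 n" by simp
  moreover have "(\<Sum>j = 1..M. G w (xi (Suc n) j)) = (\<Sum>j = 1..M. G w (xi' (Suc n) j))" for w
    using Suc.prems by (intro sum.cong) auto
  ultimately show ?case by (simp add: Let_def)
qed simp

lemma mbspa_finite: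
  fixes h :: "'a::euclidean_space \<Rightarrow> ereal"
  assumes "proper_fun h" "closed_fun h" "convex_fun h" "\<gamma> > 0" and "h w1 = ereal c"
  obtains v where "h (mbspa G \<zeta> h lam \<gamma> M xi w1 n) = ereal v"
proof (cases n)
  case (Suc m)
  then show ?thesis using prox_variational_ineq[OF assms(1-4)] that by (simp add: Let_def) metis
qed (use assms that in simp)

lemma measurable_mbspa:
  fixes G :: "'a::euclidean_space \<Rightarrow> 'b \<Rightarrow> 'a"
  assumes G_meas: "case_prod G \<in> borel_measurable (borel \<Otimes>\<^sub>M D)"
    and \<zeta>_meas: "\<zeta> lam \<in> borel_measurable borel"
    and prox_cont: "continuous_on UNIV (prox \<gamma> h)"
    and "n \<le> N"
  shows "(\<lambda>x. mbspa G \<zeta> h lam \<gamma> M (\<lambda>k j. x (k, j)) w1 n) \<in> borel_measurable (PiM ({1..N} \<times> {1..M}) (\<lambda>_. D))"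
  using \<open>n \<le> N\<close>
proof (induction n)
  case (Suc n)
  let ?Q = "PiM ({1..N} \<times> {1..M}) (\<lambda>_. D)"
  let ?W = "\<lambda>x. mbspa G \<zeta> h lam \<gamma> M (\<lambda>k j. x (k, j)) w1 n"
  have W[measurable]: "?W \<in> borel_measurable ?Q" using Suc by simp
  have "(\<lambda>x. G (?W x) (x (Suc n, j))) \<in> borel_measurable ?Q" if "j \<in> {1..M}" for j
  proof -
    have "(\<lambda>x. (?W x, x (Suc n, j))) \<in> measurable ?Q (borel \<Otimes>\<^sub>M D)"
      using that Suc.prems by (intro measurable_Pair W) (auto intro!: measurable_component_singleton)
    from measurable_compose[OF this G_meas] show ?thesis by simp
  qed
  then have [measurable]: "(\<lambda>x. \<Sum>j = 1..M. G (?W x) (x (Suc n, j))) \<in> borel_measurable ?Q"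
    by (intro borel_measurable_sum) auto
  have [measurable]: "(\<lambda>x. \<zeta> lam (?W x)) \<in> borel_measurable ?Q"
    using measurable_compose[OF W \<zeta>_meas] by simp
  have [measurable]: "prox \<gamma> h \<in> borel_measurable borel"
    using prox_cont by (rule borel_measurable_continuous_onI)
  show ?case unfolding mbspa.simps Let_def by measurable
qed simp

lemma sum_le_telescoping_ennreal:
  fixes E e :: "nat \<Rightarrow> ennreal"
  assumes "\<And>n. n < N \<Longrightarrow> E (Suc n) + e n \<le> E n + c"
  shows "(\<Sum>n<N. e n) \<le> E 0 + of_nat N * c"
proof -
  have "E m + (\<Sum>n<m. e n) \<le> E 0 + of_nat m * c" if "m \<le> N" for m
    using that
  proof (induction m)
    case (Suc m)
    have "E (Suc m) + (\<Sum>n<Suc m. e n) = (E (Suc m) + e m) + (\<Sum>n<m. e n)"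
      by (simp add: algebra_simps)
    also have "\<dots> \<le> (E m + (\<Sum>n<m. e n)) + c"
      using assms[of m] Suc.prems add_right_mono by (fastforce simp: algebra_simps)
    also have "\<dots> \<le> E 0 + of_nat (Suc m) * c"
      using Suc add_right_mono by (fastforce simp: algebra_simps)
    finally show ?case .
  qed simp
  from this[OF order_refl] show ?thesis by (rule order_trans[rotated]) simp
qed

lemma AE_uniform_index_in_range:
  assumes P: "prob_space P" and R_meas: "R \<in> measurable P (count_space UNIV)" and "N > 0"
    and R_unif: "\<And>k. k \<in> {1..N} \<Longrightarrow> measure P {\<omega> \<in> space P. R \<omega> = k} = 1 / real N"
  shows "AE \<omega> in P. R \<omega> \<in> {1..N}"
proof -
  interpret prob_space P by fact
  have "prob {\<omega> \<in> space P. R \<omega> \<in> {1..N}} = prob (\<Union>k\<in>{1..N}. {\<omega> \<in> space P. R \<omega> = k})"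
    by (rule arg_cong[where f = prob]) auto
  also have "\<dots> = (\<Sum>k\<in>{1..N}. prob {\<omega> \<in> space P. R \<omega> = k})"
    using R_meas by (intro finite_measure_finite_Union) (auto simp: disjoint_family_on_def)
  also have "\<dots> = 1" using R_unif \<open>N > 0\<close> by simp
  finally show ?thesis by (auto dest: AE_prob_1)
qed

lemma nn_integral_at_uniform_random_index:
  fixes X :: "'w \<Rightarrow> 'x" and R :: "'w \<Rightarrow> nat" and Y :: "nat \<Rightarrow> 'x \<Rightarrow> ennreal"
  assumes P: "prob_space P" and Q: "prob_space Q"
    and X_meas: "X \<in> measurable P Q" and R_meas: "R \<in> measurable P (count_space UNIV)"
    and "N > 0" and R_unif: "\<And>k. k \<in> {1..N} \<Longrightarrow> measure P {\<omega> \<in> space P. R \<omega> = k} = 1 / real N"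
    and indep: "distr P (Q \<Otimes>\<^sub>M count_space UNIV) (\<lambda>\<omega>. (X \<omega>, R \<omega>))
                  = Q \<Otimes>\<^sub>M distr P (count_space UNIV) R"
    and Y_meas: "\<And>n. n < N \<Longrightarrow> Y n \<in> borel_measurable Q"
  shows "(\<integral>\<^sup>+ \<omega>. Y (R \<omega> - 1) (X \<omega>) \<partial>P) = ennreal (1 / real N) * (\<Sum>n<N. \<integral>\<^sup>+ x. Y n x \<partial>Q)"
proof -
  interpret P: prob_space P by fact
  define Rd where "Rd = distr P (count_space UNIV) R"
  interpret QR: pair_sigma_finite Q Rd
    unfolding Rd_def using Q P.prob_space_distr[OF R_meas]
    by (simp add: pair_sigma_finite_def prob_space_imp_sigma_finite)
  have select: "(\<Sum>k\<in>{1..N}. c k * indicator {k} r) = (if r \<in> {1..N} then c r else 0)"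
    for c :: "nat \<Rightarrow> ennreal" and r
    by (simp add: indicator_def if_distrib sum.If_cases)
  define H where "H z = (\<Sum>k\<in>{1..N}. Y (k - 1) (fst z) * indicator {k} (snd z))" for z
  have H_eq: "H (x, r) = (if r \<in> {1..N} then Y (r - 1) x else 0)" for x r
    unfolding H_def fst_conv snd_conv by (rule select)
  have "(\<lambda>z. Y (k - 1) (fst z) * indicator {k} (snd z)) \<in> borel_measurable (Q \<Otimes>\<^sub>M count_space UNIV)"
    if "k \<in> {1..N}" for k
  proof (rule borel_measurable_times_ennreal)
    show "(\<lambda>z. Y (k - 1) (fst z)) \<in> borel_measurable (Q \<Otimes>\<^sub>M count_space UNIV)"
      using Y_meas that by (intro measurable_compose[OF measurable_fst]) auto
    show "(\<lambda>z. indicator {k} (snd z)) \<in> borel_measurable (Q \<Otimes>\<^sub>M count_space UNIV)"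
      by (intro measurable_compose[OF measurable_snd]) simp
  qed
  then have H_meas: "H \<in> borel_measurable (Q \<Otimes>\<^sub>M count_space UNIV)"
    unfolding H_def by (rule borel_measurable_sum)
  have sets_eq: "sets (Q \<Otimes>\<^sub>M Rd) = sets (Q \<Otimes>\<^sub>M count_space UNIV)"
    unfolding Rd_def by (rule sets_pair_measure_cong[OF refl sets_distr])
  have H_meas_Rd: "H \<in> borel_measurable (Q \<Otimes>\<^sub>M Rd)"
    using H_meas unfolding measurable_cong_sets[OF sets_eq refl] .
  have "AE \<omega> in P. R \<omega> \<in> {1..N}" by (rule AE_uniform_index_in_range[OF P R_meas \<open>N > 0\<close> R_unif])
  then have "AE \<omega> in P. Y (R \<omega> - 1) (X \<omega>) = H (X \<omega>, R \<omega>)"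
    by eventually_elim (simp add: H_eq)
  then have "(\<integral>\<^sup>+ \<omega>. Y (R \<omega> - 1) (X \<omega>) \<partial>P) = (\<integral>\<^sup>+ \<omega>. H (X \<omega>, R \<omega>) \<partial>P)"
    by (rule nn_integral_cong_AE)
  also have "\<dots> = (\<integral>\<^sup>+ z. H z \<partial>distr P (Q \<Otimes>\<^sub>M count_space UNIV) (\<lambda>\<omega>. (X \<omega>, R \<omega>)))"
    using H_meas by (intro nn_integral_distr[symmetric] measurable_Pair X_meas R_meas) simp
  also have "\<dots> = (\<integral>\<^sup>+ z. H z \<partial>(Q \<Otimes>\<^sub>M Rd))"
    by (simp only: indep Rd_def)
  also have "\<dots> = (\<integral>\<^sup>+ r. (\<integral>\<^sup>+ x. H (x, r) \<partial>Q) \<partial>Rd)"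
    using QR.nn_integral_snd[OF H_meas_Rd] by simp
  also have "\<dots> = (\<integral>\<^sup>+ r. (\<Sum>k\<in>{1..N}. (\<integral>\<^sup>+ x. Y (k - 1) x \<partial>Q) * indicator {k} r) \<partial>Rd)"
  proof (rule nn_integral_cong)
    fix r
    show "(\<integral>\<^sup>+ x. H (x, r) \<partial>Q) = (\<Sum>k\<in>{1..N}. (\<integral>\<^sup>+ x. Y (k - 1) x \<partial>Q) * indicator {k} r)"
      unfolding select H_eq by (cases "r \<in> {1..N}") auto
  qed
  also have "\<dots> = (\<Sum>k\<in>{1..N}. (\<integral>\<^sup>+ x. Y (k - 1) x \<partial>Q) * emeasure Rd {k})"
    unfolding Rd_def by (subst nn_integral_sum) (auto intro!: sum.cong nn_integral_cmult_indicator)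
  also have "\<dots> = (\<Sum>k\<in>{1..N}. (\<integral>\<^sup>+ x. Y (k - 1) x \<partial>Q) * ennreal (1 / real N))"
  proof (rule sum.cong)
    fix k
    assume "k \<in> {1..N}"
    have "emeasure Rd {k} = emeasure P (R -` {k} \<inter> space P)"
      unfolding Rd_def using R_meas by (simp add: emeasure_distr)
    also have "R -` {k} \<inter> space P = {\<omega> \<in> space P. R \<omega> = k}" by auto
    also have "emeasure P \<dots> = ennreal (1 / real N)"
      using R_unif[OF \<open>k \<in> {1..N}\<close>] by (simp add: P.emeasure_eq_measure)
    finally show "(\<integral>\<^sup>+ x. Y (k - 1) x \<partial>Q) * emeasure Rd {k} = (\<integral>\<^sup>+ x. Y (k - 1) x \<partial>Q) * ennreal (1 / real N)"
      by simp
  qed simp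
  also have "\<dots> = ennreal (1 / real N) * (\<Sum>n<N. \<integral>\<^sup>+ x. Y n x \<partial>Q)"
    by (simp add: sum.atLeast1_atMost_eq sum_distrib_left mult.commute)
  finally show ?thesis .
qed

locale mbspa_setting = prox_grad h \<psi> d\<psi> \<gamma>
  for h :: "'a::euclidean_space \<Rightarrow> ereal" and \<psi> d\<psi> \<gamma> +
  fixes D :: "'b measure" and G :: "'a \<Rightarrow> 'b \<Rightarrow> 'a" and gradf :: "'a \<Rightarrow> 'a"
    and \<zeta> :: "real \<Rightarrow> 'a \<Rightarrow> 'a" and lam \<sigma> :: real and M N :: nat and w1 :: 'a and \<psi>min :: real
  assumes D_prob: "prob_space D"
    and G_unbiased: "\<And>w. integrable D (G w) \<and> (\<integral>\<xi>. G w \<xi> \<partial>D) = gradf w"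
    and G_var: "\<And>w. integrable D (\<lambda>\<xi>. (norm (G w \<xi> - gradf w))\<^sup>2)
                     \<and> (\<integral>\<xi>. (norm (G w \<xi> - gradf w))\<^sup>2 \<partial>D) \<le> \<sigma>\<^sup>2"
    and G_meas: "case_prod G \<in> borel_measurable (borel \<Otimes>\<^sub>M D)"
    and \<zeta>_meas: "\<zeta> lam \<in> borel_measurable borel"
    and d\<psi>_eq: "\<And>w. d\<psi> w = gradf w + (1 / lam) *\<^sub>R (w - \<zeta> lam w)"
    and \<psi>_meas: "\<psi> \<in> borel_measurable borel"
    and d\<psi>_meas: "d\<psi> \<in> borel_measurable borel"
    and batch_pos: "0 < M"
    and start_finite: "h w1 \<noteq> \<infinity>"
    and min_le: "\<And>y hy. h y = ereal hy \<Longrightarrow> \<psi>min \<le> \<psi> y + hy"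
begin

definition gap :: "'a \<Rightarrow> real" where
  "gap w = \<psi> w + real_of_ereal (h w) - \<psi>min"

lemma gap_eq:
  assumes "h w = ereal hw"
  shows "gap w = \<psi> w + hw - \<psi>min" and "0 \<le> gap w"
  using min_le[OF assms] assms by (simp_all add: gap_def)

lemma expected_minibatch_step:
  fixes J :: "'i set"
  assumes J: "finite J" "card J = M" and hw: "h w = ereal hw"
  shows "(\<integral>\<^sup>+ b. ennreal (gap (prox \<gamma> h (w - \<gamma> *\<^sub>R ((1 / real M) *\<^sub>R (\<Sum>i\<in>J. G w (b i))
                                            + (1 / lam) *\<^sub>R (w - \<zeta> lam w)))))
                + ennreal (\<gamma> / 4 * (norm (grad_mapping w))\<^sup>2) \<partial>PiM J (\<lambda>_. D))
         \<le> ennreal (gap w) + ennreal (3 * \<gamma> / 2 * (\<sigma>\<^sup>2 / real M))"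
proof -
  interpret PJ: prob_space "PiM J (\<lambda>_. D)" using D_prob by (intro prob_space_PiM) auto
  define S where "S b = (\<Sum>i\<in>J. G w (b i) - gradf w)" for b
  have S_int: "integrable (PiM J (\<lambda>_. D)) S" and S_mean: "(\<integral>b. S b \<partial>PiM J (\<lambda>_. D)) = 0"
    and S_sq_int: "integrable (PiM J (\<lambda>_. D)) (\<lambda>b. (norm (S b))\<^sup>2)"
    and S_sq: "(\<integral>b. (norm (S b))\<^sup>2 \<partial>PiM J (\<lambda>_. D)) \<le> real M * \<sigma>\<^sup>2"
    using minibatch_noise_moments[OF D_prob J(1), of "G w" "gradf w" "\<sigma>\<^sup>2"] G_unbiased G_var J(2)
    unfolding S_def by auto
  define \<delta> where "\<delta> b = (1 / real M) *\<^sub>R S b" for b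
  define bound where
    "bound = (\<lambda>b. gap w + \<gamma> * (\<delta> b \<bullet> grad_mapping w) + 3 * \<gamma> / 2 * (norm (\<delta> b))\<^sup>2)"
  have direction: "(1 / real M) *\<^sub>R (\<Sum>i\<in>J. G w (b i)) + (1 / lam) *\<^sub>R (w - \<zeta> lam w) = d\<psi> w + \<delta> b" for b
    using batch_pos J
    by (simp add: \<delta>_def S_def d\<psi>_eq sum_subtractf sum_constant_scaleR scaleR_diff_right algebra_simps)
  have pointwise: "ennreal (gap (prox \<gamma> h (w - \<gamma> *\<^sub>R (d\<psi> w + \<delta> b))))
                     + ennreal (\<gamma> / 4 * (norm (grad_mapping w))\<^sup>2) \<le> ennreal (bound b)"
    and bound_nonneg: "0 \<le> bound b" for b
  proof -
    obtain hp where hp: "h (prox \<gamma> h (w - \<gamma> *\<^sub>R (d\<psi> w + \<delta> b))) = ereal hp"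
      and step: "\<psi> (prox \<gamma> h (w - \<gamma> *\<^sub>R (d\<psi> w + \<delta> b))) + hp
                   \<le> \<psi> w + hw - \<gamma> / 4 * (norm (grad_mapping w))\<^sup>2 + \<gamma> * (\<delta> b \<bullet> grad_mapping w)
                     + 3 * \<gamma> / 2 * (norm (\<delta> b))\<^sup>2"
      using perturbed_prox_grad_step[OF hw] by blast
    then have le: "gap (prox \<gamma> h (w - \<gamma> *\<^sub>R (d\<psi> w + \<delta> b))) + \<gamma> / 4 * (norm (grad_mapping w))\<^sup>2 \<le> bound b"
      using gap_eq(1)[OF hp] gap_eq(1)[OF hw] by (simp add: bound_def)
    moreover have "0 \<le> gap (prox \<gamma> h (w - \<gamma> *\<^sub>R (d\<psi> w + \<delta> b)))" "0 \<le> \<gamma> / 4 * (norm (grad_mapping w))\<^sup>2"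
      using gap_eq(2)[OF hp] step_pos by simp_all
    ultimately show "ennreal (gap (prox \<gamma> h (w - \<gamma> *\<^sub>R (d\<psi> w + \<delta> b))))
                     + ennreal (\<gamma> / 4 * (norm (grad_mapping w))\<^sup>2) \<le> ennreal (bound b)"
      and "0 \<le> bound b"
      by (simp_all add: ennreal_plus[symmetric] ennreal_leI del: ennreal_plus)
  qed
  have "(\<integral>b. bound b \<partial>PiM J (\<lambda>_. D))
      = gap w + 3 * \<gamma> / 2 * ((\<integral>b. (norm (S b))\<^sup>2 \<partial>PiM J (\<lambda>_. D)) / (real M)\<^sup>2)"
    using S_int S_sq_int S_mean
    by (simp add: bound_def \<delta>_def PJ.prob_space power_divide power_mult_distrib)
  also have "\<dots> \<le> gap w + 3 * \<gamma> / 2 * (real M * \<sigma>\<^sup>2 / (real M)\<^sup>2)"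
    using S_sq step_pos by (intro add_left_mono mult_left_mono divide_right_mono) auto
  also have "\<dots> = gap w + 3 * \<gamma> / 2 * (\<sigma>\<^sup>2 / real M)"
    using batch_pos by (simp add: power2_eq_square)
  finally have bound_int: "(\<integral>b. bound b \<partial>PiM J (\<lambda>_. D)) \<le> gap w + 3 * \<gamma> / 2 * (\<sigma>\<^sup>2 / real M)" .
  have "(\<integral>\<^sup>+ b. ennreal (gap (prox \<gamma> h (w - \<gamma> *\<^sub>R ((1 / real M) *\<^sub>R (\<Sum>i\<in>J. G w (b i))
                                            + (1 / lam) *\<^sub>R (w - \<zeta> lam w)))))
                + ennreal (\<gamma> / 4 * (norm (grad_mapping w))\<^sup>2) \<partial>PiM J (\<lambda>_. D))
      \<le> (\<integral>\<^sup>+ b. ennreal (bound b) \<partial>PiM J (\<lambda>_. D))"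
    unfolding direction by (intro nn_integral_mono pointwise)
  also have "\<dots> = ennreal (\<integral>b. bound b \<partial>PiM J (\<lambda>_. D))"
  proof (rule nn_integral_eq_integral)
    show "integrable (PiM J (\<lambda>_. D)) bound"
      using S_int S_sq_int by (simp add: bound_def \<delta>_def power_divide power_mult_distrib)
    show "AE b in PiM J (\<lambda>_. D). 0 \<le> bound b"
      using bound_nonneg by simp
  qed
  also have "\<dots> \<le> ennreal (gap w) + ennreal (3 * \<gamma> / 2 * (\<sigma>\<^sup>2 / real M))"
    using bound_int gap_eq[OF hw] step_pos by (simp add: ennreal_plus[symmetric] ennreal_leI del: ennreal_plus)
  finally show ?thesis .
qed

definition samples :: "(nat \<times> nat \<Rightarrow> 'b) measure" where
  "samples = PiM ({1..N} \<times> {1..M}) (\<lambda>_. D)"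

definition iterate :: "nat \<Rightarrow> (nat \<times> nat \<Rightarrow> 'b) \<Rightarrow> 'a" where
  "iterate n x = mbspa G \<zeta> h lam \<gamma> M (\<lambda>k j. x (k, j)) w1 n"

lemma prob_space_samples: "prob_space samples"
  unfolding samples_def using D_prob by (intro prob_space_PiM) auto

lemma iterate_finite:
  obtains v where "h (iterate n x) = ereal v"
proof -
  obtain c where "h w1 = ereal c" using start_finite proper_fun_not_MInf[OF proper] by (cases "h w1") auto
  then show ?thesis
    using mbspa_finite[OF proper closed convex step_pos] that unfolding iterate_def by blast
qed

lemma measurable_iterate: "n \<le> N \<Longrightarrow> iterate n \<in> borel_measurable samples"
  unfolding iterate_def[abs_def] samples_def
  by (rule measurable_mbspa[where G = G and \<zeta> = \<zeta> and lam = lam, OF G_meas \<zeta>_meas continuous_on_prox[OF proper closed convex step_pos]])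

lemma measurable_gap: "gap \<in> borel_measurable borel"
  unfolding gap_def[abs_def] using borel_measurable_closed_fun[OF closed] \<psi>_meas by measurable

lemma measurable_grad_mapping: "grad_mapping \<in> borel_measurable borel"
proof -
  have [measurable]: "prox \<gamma> h \<in> borel_measurable borel"
    using continuous_on_prox[OF proper closed convex step_pos] by (rule borel_measurable_continuous_onI)
  show ?thesis unfolding grad_mapping_def[abs_def] using d\<psi>_meas by measurable
qed

lemma measurable_gap_iterate: "n \<le> N \<Longrightarrow> (\<lambda>x. gap (iterate n x)) \<in> borel_measurable samples"
  using measurable_compose[OF measurable_iterate measurable_gap] .

lemma measurable_grad_mapping_iterate:
  "n \<le> N \<Longrightarrow> (\<lambda>x. grad_mapping (iterate n x)) \<in> borel_measurable samples"
  using measurable_compose[OF measurable_iterate measurable_grad_mapping] .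

lemma expected_iterate_step:
  assumes "n < N"
  shows "(\<integral>\<^sup>+ x. ennreal (gap (iterate (Suc n) x)) \<partial>samples)
           + (\<integral>\<^sup>+ x. ennreal (\<gamma> / 4 * (norm (grad_mapping (iterate n x)))\<^sup>2) \<partial>samples)
         \<le> (\<integral>\<^sup>+ x. ennreal (gap (iterate n x)) \<partial>samples) + ennreal (3 * \<gamma> / 2 * (\<sigma>\<^sup>2 / real M))"
proof -
  define K where "K = {1..N} \<times> {1..M}"
  define B where "B = {Suc n} \<times> {1..M}"
  define A where "A = K - B"
  define c where "c = ennreal (3 * \<gamma> / 2 * (\<sigma>\<^sup>2 / real M))"
  have K: "K = A \<union> B" "A \<inter> B = {}" "finite A" "finite B"
    using \<open>n < N\<close> unfolding A_def B_def K_def by auto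
  interpret PS: product_sigma_finite "\<lambda>_::nat \<times> nat. D"
    using D_prob unfolding product_sigma_finite_def by (simp add: prob_space_imp_sigma_finite)
  have samples_AB: "samples = PiM (A \<union> B) (\<lambda>_. D)" unfolding samples_def K(1)[symmetric] K_def ..
  have [measurable]: "(\<lambda>x. gap (iterate n x)) \<in> borel_measurable samples"
    "(\<lambda>x. gap (iterate (Suc n) x)) \<in> borel_measurable samples"
    "(\<lambda>x. grad_mapping (iterate n x)) \<in> borel_measurable samples"
    using \<open>n < N\<close> measurable_gap_iterate measurable_grad_mapping_iterate by simp_all
  text \<open>Split the samples into those of step \<open>Suc n\<close> and the others, on which the current iterate depends.\<close>
  have iterate_merge: "iterate n (merge A B (a, b)) = iterate n a" for a b
    unfolding iterate_def
  proof (rule mbspa_cong)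
    fix m j assume "m < n" "j \<in> {1..M}"
    then have "(Suc m, j) \<in> A" using \<open>n < N\<close> unfolding A_def B_def K_def by auto
    then show "merge A B (a, b) (Suc m, j) = a (Suc m, j)" by (simp add: merge_def)
  qed
  have iterate_Suc_merge: "iterate (Suc n) (merge A B (a, b))
      = prox \<gamma> h (iterate n a - \<gamma> *\<^sub>R ((1 / real M) *\<^sub>R (\<Sum>i\<in>B. G (iterate n a) (b i))
                                      + (1 / lam) *\<^sub>R (iterate n a - \<zeta> lam (iterate n a))))" for a b
  proof -
    have "(\<Sum>j = 1..M. G (iterate n a) (merge A B (a, b) (Suc n, j))) = (\<Sum>j = 1..M. G (iterate n a) (b (Suc n, j)))"
      by (intro sum.cong) (auto simp: merge_def A_def B_def)
    also have "\<dots> = (\<Sum>i\<in>B. G (iterate n a) (b i))"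
      unfolding B_def by (subst sum.reindex[symmetric, of "\<lambda>j. (Suc n, j)", unfolded comp_def])
        (auto simp: inj_on_def intro!: sum.cong)
    finally show ?thesis using iterate_merge[of a b] by (simp add: iterate_def Let_def)
  qed
  have "(\<integral>\<^sup>+ x. ennreal (gap (iterate (Suc n) x)) \<partial>samples)
           + (\<integral>\<^sup>+ x. ennreal (\<gamma> / 4 * (norm (grad_mapping (iterate n x)))\<^sup>2) \<partial>samples)
      = (\<integral>\<^sup>+ x. ennreal (gap (iterate (Suc n) x)) + ennreal (\<gamma> / 4 * (norm (grad_mapping (iterate n x)))\<^sup>2) \<partial>samples)"
    by (intro nn_integral_add[symmetric]) auto
  also have "\<dots> = (\<integral>\<^sup>+ a. (\<integral>\<^sup>+ b. ennreal (gap (iterate (Suc n) (merge A B (a, b))))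
                     + ennreal (\<gamma> / 4 * (norm (grad_mapping (iterate n (merge A B (a, b)))))\<^sup>2) \<partial>PiM B (\<lambda>_. D)) \<partial>PiM A (\<lambda>_. D))"
    unfolding samples_AB by (rule PS.product_nn_integral_fold[OF K(2-4)]) (simp flip: samples_AB)
  also have "\<dots> \<le> (\<integral>\<^sup>+ a. ennreal (gap (iterate n a)) + c \<partial>PiM A (\<lambda>_. D))"
  proof (intro nn_integral_mono)
    fix a
    obtain v where "h (iterate n a) = ereal v" by (rule iterate_finite)
    then show "(\<integral>\<^sup>+ b. ennreal (gap (iterate (Suc n) (merge A B (a, b))))
                + ennreal (\<gamma> / 4 * (norm (grad_mapping (iterate n (merge A B (a, b)))))\<^sup>2) \<partial>PiM B (\<lambda>_. D))
          \<le> ennreal (gap (iterate n a)) + c"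
      unfolding iterate_Suc_merge iterate_merge c_def
      by (rule expected_minibatch_step[rotated 2]) (auto simp: B_def card_cartesian_product)
  qed
  also have "\<dots> = (\<integral>\<^sup>+ a. (\<integral>\<^sup>+ b. ennreal (gap (iterate n (merge A B (a, b)))) + c \<partial>PiM B (\<lambda>_. D)) \<partial>PiM A (\<lambda>_. D))"
    using D_prob by (simp add: iterate_merge prob_space.emeasure_space_1 prob_space_PiM)
  also have "\<dots> = (\<integral>\<^sup>+ x. ennreal (gap (iterate n x)) + c \<partial>samples)"
    unfolding samples_AB by (rule PS.product_nn_integral_fold[OF K(2-4), symmetric]) (simp flip: samples_AB)
  also have "\<dots> = (\<integral>\<^sup>+ x. ennreal (gap (iterate n x)) \<partial>samples) + c"
    using prob_space_samples by (subst nn_integral_add) (auto simp: prob_space.emeasure_space_1)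
  finally show ?thesis unfolding c_def .
qed

lemma sum_expected_grad_mapping_le:
  "(\<Sum>n<N. \<integral>\<^sup>+ x. ennreal ((norm (grad_mapping (iterate n x)))\<^sup>2) \<partial>samples)
     \<le> ennreal (4 / \<gamma> * gap w1 + 6 * real N * \<sigma>\<^sup>2 / real M)"
proof -
  define gn where "gn n = (\<integral>\<^sup>+ x. ennreal ((norm (grad_mapping (iterate n x)))\<^sup>2) \<partial>samples)" for n
  have gap_w1: "0 \<le> gap w1"
    using start_finite proper_fun_not_MInf[OF proper] gap_eq(2) by (cases "h w1") auto
  have "(\<integral>\<^sup>+ x. ennreal (\<gamma> / 4 * (norm (grad_mapping (iterate n x)))\<^sup>2) \<partial>samples) = ennreal (\<gamma> / 4) * gn n"
    if "n < N" for n
  proof -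
    have [measurable]: "(\<lambda>x. grad_mapping (iterate n x)) \<in> borel_measurable samples"
      using that by (simp add: measurable_grad_mapping_iterate)
    have "(\<integral>\<^sup>+ x. ennreal (\<gamma> / 4 * (norm (grad_mapping (iterate n x)))\<^sup>2) \<partial>samples)
        = (\<integral>\<^sup>+ x. ennreal (\<gamma> / 4) * ennreal ((norm (grad_mapping (iterate n x)))\<^sup>2) \<partial>samples)"
      using step_pos by (intro nn_integral_cong ennreal_mult) auto
    also have "\<dots> = ennreal (\<gamma> / 4) * gn n"
      unfolding gn_def by (rule nn_integral_cmult) measurable
    finally show ?thesis .
  qed
  then have "(\<Sum>n<N. ennreal (\<gamma> / 4) * gn n)
      \<le> (\<integral>\<^sup>+ x. ennreal (gap (iterate 0 x)) \<partial>samples) + of_nat N * ennreal (3 * \<gamma> / 2 * (\<sigma>\<^sup>2 / real M))"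
    using expected_iterate_step by (intro sum_le_telescoping_ennreal) simp
  also have "\<dots> = ennreal (\<gamma> / 4) * ennreal (4 / \<gamma> * gap w1 + 6 * real N * \<sigma>\<^sup>2 / real M)"
    using prob_space_samples step_pos batch_pos gap_w1
    by (simp add: iterate_def prob_space.emeasure_space_1 ennreal_of_nat_eq_real_of_nat field_simps
        flip: ennreal_mult ennreal_plus)
  finally show ?thesis
    using step_pos unfolding gn_def sum_distrib_left[symmetric] by (simp add: ennreal_mult_le_mult_iff)
qed

lemma expected_grad_mapping_at_random_iterate:
  fixes P :: "'w measure" and Xi :: "nat \<Rightarrow> nat \<Rightarrow> 'w \<Rightarrow> 'b" and R :: "'w \<Rightarrow> nat"
  assumes P: "prob_space P" and "N > 0"
    and Xi_meas: "\<And>k j. (k, j) \<in> {1..N} \<times> {1..M} \<Longrightarrow> Xi k j \<in> measurable P D"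
    and R_meas: "R \<in> measurable P (count_space UNIV)"
    and R_unif: "\<And>k. k \<in> {1..N} \<Longrightarrow> measure P {\<omega> \<in> space P. R \<omega> = k} = 1 / real N"
    and R_indep: "distr P ((\<Pi>\<^sub>M kj \<in> {1..N} \<times> {1..M}. D) \<Otimes>\<^sub>M count_space UNIV)
          (\<lambda>\<omega>. (restrict (\<lambda>(k, j). Xi k j \<omega>) ({1..N} \<times> {1..M}), R \<omega>))
        = (\<Pi>\<^sub>M kj \<in> {1..N} \<times> {1..M}. D) \<Otimes>\<^sub>M distr P (count_space UNIV) R"
  shows "(\<integral>\<^sup>+ \<omega>. ennreal ((norm (grad_mapping (mbspa G \<zeta> h lam \<gamma> M (\<lambda>k j. Xi k j \<omega>) w1 (R \<omega> - 1))))\<^sup>2) \<partial>P)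
         \<le> ennreal (1 / \<gamma> / real N * (4 * gap w1) + 6 / real M * \<sigma>\<^sup>2)"
proof -
  define X where "X \<omega> = restrict (\<lambda>(k, j). Xi k j \<omega>) ({1..N} \<times> {1..M})" for \<omega>
  define Y where "Y n x = ennreal ((norm (grad_mapping (iterate n x)))\<^sup>2)" for n x
  have X_meas: "X \<in> measurable P samples"
    unfolding X_def samples_def using Xi_meas by (intro measurable_restrict) auto
  have "AE \<omega> in P. R \<omega> \<in> {1..N}" by (rule AE_uniform_index_in_range[OF P R_meas \<open>N > 0\<close> R_unif])
  then have "AE \<omega> in P. mbspa G \<zeta> h lam \<gamma> M (\<lambda>k j. Xi k j \<omega>) w1 (R \<omega> - 1) = iterate (R \<omega> - 1) (X \<omega>)"
  proof eventually_elim
    case (elim \<omega>)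
    show ?case unfolding iterate_def by (rule mbspa_cong) (use elim in \<open>auto simp: X_def\<close>)
  qed
  then have "(\<integral>\<^sup>+ \<omega>. ennreal ((norm (grad_mapping (mbspa G \<zeta> h lam \<gamma> M (\<lambda>k j. Xi k j \<omega>) w1 (R \<omega> - 1))))\<^sup>2) \<partial>P)
      = (\<integral>\<^sup>+ \<omega>. Y (R \<omega> - 1) (X \<omega>) \<partial>P)"
    unfolding Y_def by (intro nn_integral_cong_AE) auto
  also have "\<dots> = ennreal (1 / real N) * (\<Sum>n<N. \<integral>\<^sup>+ x. Y n x \<partial>samples)"
  proof (rule nn_integral_at_uniform_random_index[OF P prob_space_samples X_meas R_meas \<open>N > 0\<close> R_unif])
    show "distr P (samples \<Otimes>\<^sub>M count_space UNIV) (\<lambda>\<omega>. (X \<omega>, R \<omega>))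
        = samples \<Otimes>\<^sub>M distr P (count_space UNIV) R"
      unfolding X_def samples_def by (rule R_indep)
    show "Y n \<in> borel_measurable samples" if "n < N" for n
    proof -
      have [measurable]: "(\<lambda>x. grad_mapping (iterate n x)) \<in> borel_measurable samples"
        using that by (simp add: measurable_grad_mapping_iterate)
      show ?thesis unfolding Y_def[abs_def] by measurable
    qed
  qed
  also have "\<dots> \<le> ennreal (1 / real N) * ennreal (4 / \<gamma> * gap w1 + 6 * real N * \<sigma>\<^sup>2 / real M)"
    unfolding Y_def by (intro mult_left_mono sum_expected_grad_mapping_le) simp
  also have "\<dots> = ennreal (1 / real N * (4 / \<gamma> * gap w1 + 6 * real N * \<sigma>\<^sup>2 / real M))"
    by (rule ennreal_mult'[symmetric]) simp
  also have "\<dots> = ennreal (1 / \<gamma> / real N * (4 * gap w1) + 6 / real M * \<sigma>\<^sup>2)"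
    using \<open>N > 0\<close> batch_pos step_pos by (simp add: field_simps)
  finally show ?thesis .
qed

end

lemma enn2ereal_le_ereal: "x \<le> ennreal b \<Longrightarrow> 0 \<le> b \<Longrightarrow> enn2ereal x \<le> ereal b"
  by (metis enn2ereal_ennreal less_eq_ennreal.rep_eq)

lemma smoothed_objective_quadratic_upper_bound:
  fixes f :: "'a::real_inner \<Rightarrow> real"
  assumes f_grad: "\<And>w. (f has_derivative (\<lambda>u. gradf w \<bullet> u)) (at w)"
    and f_smooth: "\<And>x y. norm (gradf x - gradf y) \<le> L * norm (x - y)"
    and \<zeta>_min: "\<And>w x. 1 / (2 * lam) * (norm (w - \<zeta> lam w))\<^sup>2 + g (\<zeta> lam w)
                         \<le> 1 / (2 * lam) * (norm (w - x))\<^sup>2 + g x"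
  shows "f y + env g \<zeta> lam y
           \<le> f x + env g \<zeta> lam x + (gradf x + (1 / lam) *\<^sub>R (x - \<zeta> lam x)) \<bullet> (y - x)
             + (L + 1 / lam) / 2 * (norm (y - x))\<^sup>2"
proof -
  have "(L + 1 / lam) / 2 * (norm (y - x))\<^sup>2 = L / 2 * (norm (y - x))\<^sup>2 + 1 / (2 * lam) * (norm (y - x))\<^sup>2"
    by (simp add: add_divide_distrib distrib_right)
  then show ?thesis
    using lipschitz_gradient_quadratic_upper_bound[OF f_grad f_smooth, of y x]
      env_quadratic_upper_bound[where g = g and \<zeta> = \<zeta>, OF \<zeta>_min, of y x]
      inner_add_left[of "gradf x" "(1 / lam) *\<^sub>R (x - \<zeta> lam x)" "y - x"]
    by linarith
qed

lemma smoothed_mbspa_setting: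
  fixes f g :: "'a::euclidean_space \<Rightarrow> real" and h :: "'a \<Rightarrow> ereal"
  assumes h: "proper_fun h" "closed_fun h" "convex_fun h"
    and Lg_pos: "0 < L + 1 / lam"
    and f_grad: "\<And>w. (f has_derivative (\<lambda>u. gradf w \<bullet> u)) (at w)"
    and f_smooth: "\<And>x y. norm (gradf x - gradf y) \<le> L * norm (x - y)"
    and \<zeta>_min: "\<And>w x. 1 / (2 * lam) * (norm (w - \<zeta> lam w))\<^sup>2 + g (\<zeta> lam w)
                         \<le> 1 / (2 * lam) * (norm (w - x))\<^sup>2 + g x"
    and \<zeta>_meas: "\<zeta> lam \<in> borel_measurable borel"
    and G: "prob_space D"
      "\<And>w. integrable D (G w) \<and> (\<integral>\<xi>. G w \<xi> \<partial>D) = gradf w"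
      "\<And>w. integrable D (\<lambda>\<xi>. (norm (G w \<xi> - gradf w))\<^sup>2)
             \<and> (\<integral>\<xi>. (norm (G w \<xi> - gradf w))\<^sup>2 \<partial>D) \<le> \<sigma>\<^sup>2"
      "case_prod G \<in> borel_measurable (borel \<Otimes>\<^sub>M D)"
    and rest: "0 < M" "h w1 \<noteq> \<infinity>" "\<And>y hy. h y = ereal hy \<Longrightarrow> \<psi>min \<le> f y + env g \<zeta> lam y + hy"
  shows "mbspa_setting h (\<lambda>w. f w + env g \<zeta> lam w) (\<lambda>w. gradf w + (1 / lam) *\<^sub>R (w - \<zeta> lam w))
           (1 / (L + 1 / lam)) D G gradf \<zeta> lam \<sigma> M w1 \<psi>min"
proof -
  have "prox_grad h (\<lambda>w. f w + env g \<zeta> lam w) (\<lambda>w. gradf w + (1 / lam) *\<^sub>R (w - \<zeta> lam w)) (1 / (L + 1 / lam))"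
    using h Lg_pos smoothed_objective_quadratic_upper_bound[where g = g and \<zeta> = \<zeta>, OF f_grad f_smooth \<zeta>_min]
    by unfold_locales simp_all
  moreover have "continuous_on UNIV f"
    using has_derivative_continuous[OF f_grad] by (simp add: continuous_at_imp_continuous_on)
  then have [measurable]: "f \<in> borel_measurable borel" by (rule borel_measurable_continuous_onI)
  have [measurable]: "env g \<zeta> lam \<in> borel_measurable borel"
    by (rule borel_measurable_env[where g = g and \<zeta> = \<zeta>, OF \<zeta>_min])
  have "continuous_on UNIV gradf"
    using lipschitz_const_nonneg[OF f_smooth] f_smooth
    by (intro lipschitz_on_continuous_on[of L]) (simp add: lipschitz_on_def dist_norm)
  then have [measurable]: "gradf \<in> borel_measurable borel" by (rule borel_measurable_continuous_onI)
  have "(\<lambda>w. f w + env g \<zeta> lam w) \<in> borel_measurable borel"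
    and "(\<lambda>w. gradf w + (1 / lam) *\<^sub>R (w - \<zeta> lam w)) \<in> borel_measurable borel"
    using \<zeta>_meas by measurable
  ultimately show ?thesis
    unfolding mbspa_setting_def mbspa_setting_axioms_def
    by (intro conjI allI impI) (simp_all add: G \<zeta>_meas rest)
qed

theorem lemma2:
  fixes f g :: "'a::euclidean_space \<Rightarrow> real"
    and h :: "'a \<Rightarrow> ereal"
    and gradf :: "'a \<Rightarrow> 'a"
    and F :: "'a \<Rightarrow> 'b \<Rightarrow> real"
    and G :: "'a \<Rightarrow> 'b \<Rightarrow> 'a"
    and D :: "'b measure"
    and P :: "'w measure"
    and Xi :: "nat \<Rightarrow> nat \<Rightarrow> 'w \<Rightarrow> 'b"
    and R :: "'w \<Rightarrow> nat"
    and \<zeta> :: "real \<Rightarrow> 'a \<Rightarrow> 'a"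
    and L \<sigma> \<alpha> \<theta> :: real and N :: nat and w1 wstar :: 'a
  assumes D_prob: "prob_space D"
    and f_exp: "\<And>w. integrable D (F w) \<and> f w = (\<integral>\<xi>. F w \<xi> \<partial>D)"
    and F_grad: "\<And>w \<xi>. ((\<lambda>v. F v \<xi>) has_derivative (\<lambda>u. G w \<xi> \<bullet> u)) (at w)"
    and f_grad: "\<And>w. (f has_derivative (\<lambda>u. gradf w \<bullet> u)) (at w)"
    and f_smooth: "\<And>x y. norm (gradf x - gradf y) \<le> L * norm (x - y)"
    and G_unbiased: "\<And>w. integrable D (G w) \<and> (\<integral>\<xi>. G w \<xi> \<partial>D) = gradf w"
    and G_var: "\<And>w. integrable D (\<lambda>\<xi>. (norm (G w \<xi> - gradf w))\<^sup>2)
                     \<and> (\<integral>\<xi>. (norm (G w \<xi> - gradf w))\<^sup>2 \<partial>D) \<le> \<sigma>\<^sup>2"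
    and G_meas: "case_prod G \<in> borel_measurable (borel \<Otimes>\<^sub>M D)"
    and \<zeta>_min: "\<And>lam w x. lam > 0 \<Longrightarrow>
          1 / (2 * lam) * (norm (w - \<zeta> lam w))\<^sup>2 + g (\<zeta> lam w) \<le> 1 / (2 * lam) * (norm (w - x))\<^sup>2 + g x"
    and \<zeta>_meas: "\<And>lam. lam > 0 \<Longrightarrow> \<zeta> lam \<in> borel_measurable borel"
    and h_proper: "proper_fun h" and h_closed: "closed_fun h" and h_convex: "convex_fun h"
    and N_pos: "N > 0"
    and wstar_min: "\<And>w. ereal (f wstar + env g \<zeta> (real N powr (-\<theta>)) wstar) + h wstar
                        \<le> ereal (f w + env g \<zeta> (real N powr (-\<theta>)) w) + h w"
    and P_prob: "prob_space P"
    and Xi_iid: "prob_space.indep_vars P (\<lambda>_. D) (\<lambda>(k, j). Xi k j)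
                   ({1..N} \<times> {1..nat \<lceil>real N powr \<alpha>\<rceil>})"
    and Xi_distr: "\<And>k j. k \<in> {1..N} \<Longrightarrow> j \<in> {1..nat \<lceil>real N powr \<alpha>\<rceil>} \<Longrightarrow> distr P D (Xi k j) = D"
    and R_meas: "R \<in> measurable P (count_space UNIV)"
    and R_unif: "\<And>k. k \<in> {1..N} \<Longrightarrow> measure P {\<omega> \<in> space P. R \<omega> = k} = 1 / real N"
    and R_indep: "distr P ((\<Pi>\<^sub>M kj \<in> {1..N} \<times> {1..nat \<lceil>real N powr \<alpha>\<rceil>}. D) \<Otimes>\<^sub>M count_space UNIV)
          (\<lambda>\<omega>. (restrict (\<lambda>(k, j). Xi k j \<omega>) ({1..N} \<times> {1..nat \<lceil>real N powr \<alpha>\<rceil>}), R \<omega>))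
        = (\<Pi>\<^sub>M kj \<in> {1..N} \<times> {1..nat \<lceil>real N powr \<alpha>\<rceil>}. D) \<Otimes>\<^sub>M distr P (count_space UNIV) R"
  shows "(let lam = real N powr (-\<theta>); \<gamma> = 1 / (L + real N powr \<theta>);
              M = nat \<lceil>real N powr \<alpha>\<rceil>;
              \<Phi> = (\<lambda>w. ereal (f w + env g \<zeta> lam w) + h w);
              wR = (\<lambda>\<omega>. mbspa G \<zeta> h lam \<gamma> M (\<lambda>k j. Xi k j \<omega>) w1 (R \<omega> - 1))
          in enn2ereal (\<integral>\<^sup>+ \<omega>. ennreal ((norm (grad_map gradf \<zeta> h lam \<gamma> (wR \<omega>)))\<^sup>2) \<partial>P)
             \<le> ereal ((L + real N powr \<theta>) / real N) * (4 * (\<Phi> w1 - \<Phi> wstar))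
                + ereal (6 / real M * \<sigma>\<^sup>2))"
proof -
  define lam where "lam = real N powr -\<theta>"
  define M where "M = nat \<lceil>real N powr \<alpha>\<rceil>"
  have lam: "0 < lam" "real N powr \<theta> = 1 / lam" using N_pos by (simp_all add: lam_def powr_minus divide_inverse)
  have Lg_pos: "0 < L + 1 / lam" using lipschitz_const_nonneg[OF f_smooth] lam(1) by (intro add_nonneg_pos) auto
  have M_pos: "0 < M" using N_pos by (simp add: M_def)
  obtain x0 c where "h x0 = ereal c" using proper_fun_finite_point[OF h_proper] by blast
  then obtain hws where hws: "h wstar = ereal hws"
    using wstar_min[of x0] proper_fun_not_MInf[OF h_proper, of wstar] by (cases "h wstar") auto
  define \<psi>min where "\<psi>min = f wstar + env g \<zeta> lam wstar + hws"
  have min_le: "\<psi>min \<le> f y + env g \<zeta> lam y + hy" if "h y = ereal hy" for y hy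
    using wstar_min[of y] that hws by (simp add: \<psi>min_def lam_def)
  have Xi_meas: "Xi k j \<in> measurable P D" if "(k, j) \<in> {1..N} \<times> {1..M}" for k j
    using Xi_iid that unfolding prob_space.indep_vars_def[OF P_prob] M_def by auto
  show ?thesis
  proof (cases "h w1 = \<infinity>")
    case True
    then show ?thesis using Lg_pos N_pos hws by (simp add: Let_def lam(2) flip: lam_def)
  next
    case False
    then obtain hw1 where hw1: "h w1 = ereal hw1" using proper_fun_not_MInf[OF h_proper] by (cases "h w1") auto
    interpret mbspa_setting h "\<lambda>w. f w + env g \<zeta> lam w" "\<lambda>w. gradf w + (1 / lam) *\<^sub>R (w - \<zeta> lam w)"
      "1 / (L + 1 / lam)" D G gradf \<zeta> lam \<sigma> M N w1 \<psi>min
      using h_proper h_closed h_convex Lg_pos f_grad f_smooth \<zeta>_min[OF lam(1)] \<zeta>_meas[OF lam(1)]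
        D_prob G_unbiased G_var G_meas M_pos False min_le
      by (rule smoothed_mbspa_setting)
    have "grad_map gradf \<zeta> h lam (1 / (L + 1 / lam)) = grad_mapping"
      by (simp add: fun_eq_iff grad_map_def grad_mapping_def)
    then have "(\<integral>\<^sup>+ \<omega>. ennreal ((norm (grad_map gradf \<zeta> h lam (1 / (L + 1 / lam))
                   (mbspa G \<zeta> h lam (1 / (L + 1 / lam)) M (\<lambda>k j. Xi k j \<omega>) w1 (R \<omega> - 1))))\<^sup>2) \<partial>P)
        \<le> ennreal ((L + 1 / lam) / real N * (4 * gap w1) + 6 / real M * \<sigma>\<^sup>2)" (is "?I \<le> ennreal ?B")
      using expected_grad_mapping_at_random_iterate[OF P_prob N_pos Xi_meas R_meas R_unif R_indep[folded M_def]]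
      by simp
    moreover have "0 \<le> ?B" using Lg_pos gap_eq(2)[OF hw1] by simp
    ultimately have "enn2ereal ?I \<le> ereal ?B" by (rule enn2ereal_le_ereal)
    then show ?thesis
      using hws hw1 gap_eq(1)[OF hw1]
      by (simp add: Let_def lam(2) \<psi>min_def flip: lam_def M_def)
  qed
qed

end
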